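(* For any low-rank POMDP with transition feature dimension $d_{\mathrm{trans}}$, the minimum core test set size is at most $d_{\mathrm{trans}}$; that is, $\mathrm{rank}(D_h)\le d_{\mathrm{trans}}$ for every $h$, so $d_{\mathrm{PSR}}\le d_{\mathrm{trans}}$.
   Context: An episodic POMDP has finite state space $\mathcal{S}$, finite $\mathcal{O},\mathcal{A}$, horizon $H$, transitions $\mathbb{T}_h(s'\mid s,a)$ and emissions $\mathbb{O}_h(o\mid s)$. It is low-rank if for all $h$, $\mathbb{T}_h(s'\mid s,a)=\psi_h(s')^\top\phi_h(s,a)$ for some maps $\psi_h:\mathcal{S}\to\mathbb{R}^{d_{\mathrm{trans}}}$, $\phi_h:\mathcal{S}\times\mathcal{A}\to\mathbb{R}^{d_{\mathrm{trans}}}$. Histories $\tau_h=(o_1,a_1,\dots,o_h,a_h)$. For a test $t=(o_{h+1},\dots,o_{h+W},a_{h+1},\dots,a_{h+W-1})$, $\mathbb{P}(t\mid\tau_h)$ is the probability of observing $o_{h+1:h+W}$ when executing $a_{h+1:h+W-1}$ after $\tau_h$ ($0$ if unreachable). $D_h$ is the matrix with rows indexed by tests starting at step $h+1$, columns by histories $\tau_h$, entries $\mathbb{P}(t\mid\tau_h)$; $d_{\mathrm{PSR}}=\max_h\mathrm{rank}(D_h)$, and $\mathrm{rank}(D_h)$ equals the size of a minimum core test set at step $h+1$. *)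

theory Defs
  imports Complex_Main "HOL-Library.Function_Algebras"
begin

text \<open>Steps are numbered 1..H.  T k s a s' = T_k(s' | s, a) (transition from step k to k+1),
  Om k s o = O_k(o | s), mu = distribution of the initial state s_1.
  A history of length h is a list [(o_1,a_1),...,(o_h,a_h)].
  A test at step h+1 is a pair (os, as) with os = [o_{h+1},...,o_{h+W}],
  as = [a_{h+1},...,a_{h+W-1}], W >= 1 and h + W <= H.\<close>

definition stochastic_pomdp ::
  "nat \<Rightarrow> ('S::finite \<Rightarrow> real) \<Rightarrow> (nat \<Rightarrow> 'S \<Rightarrow> 'A::finite \<Rightarrow> 'S \<Rightarrow> real)
     \<Rightarrow> (nat \<Rightarrow> 'S \<Rightarrow> 'O::finite \<Rightarrow> real) \<Rightarrow> bool" where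
  "stochastic_pomdp H mu T Om \<longleftrightarrow>
     (\<forall>s. 0 \<le> mu s) \<and> (\<Sum>s\<in>UNIV. mu s) = 1 \<and>
     (\<forall>k\<in>{1..H}. \<forall>s a. (\<forall>s'. 0 \<le> T k s a s') \<and> (\<Sum>s'\<in>UNIV. T k s a s') = 1) \<and>
     (\<forall>k\<in>{1..H}. \<forall>s. (\<forall>ob. 0 \<le> Om k s ob) \<and> (\<Sum>ob\<in>UNIV. Om k s ob) = 1)"

definition low_rank ::
  "nat \<Rightarrow> nat \<Rightarrow> (nat \<Rightarrow> 'S \<Rightarrow> 'A \<Rightarrow> 'S \<Rightarrow> real) \<Rightarrow> bool" where
  "low_rank H d T \<longleftrightarrow>
     (\<exists>psi :: nat \<Rightarrow> 'S \<Rightarrow> nat \<Rightarrow> real. \<exists>phi :: nat \<Rightarrow> 'S \<Rightarrow> 'A \<Rightarrow> nat \<Rightarrow> real.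
        \<forall>k\<in>{1..H}. \<forall>s a s'. T k s a s' = (\<Sum>i<d. psi k s' i * phi k s a i))"

text \<open>Forward recursion: fwd T Om k b tau s' is the (unnormalised) joint probability of
  the observations in tau and of the next state being s', when the state at step k has
  (sub)distribution b and the actions in tau are executed.\<close>
fun fwd :: "(nat \<Rightarrow> 'S::finite \<Rightarrow> 'A \<Rightarrow> 'S \<Rightarrow> real) \<Rightarrow> (nat \<Rightarrow> 'S \<Rightarrow> 'O \<Rightarrow> real)
     \<Rightarrow> nat \<Rightarrow> ('S \<Rightarrow> real) \<Rightarrow> ('O \<times> 'A) list \<Rightarrow> 'S \<Rightarrow> real" where
  "fwd T Om k b [] = b"
| "fwd T Om k b ((ob,a) # tau) =
     fwd T Om (Suc k) (\<lambda>s'. \<Sum>s\<in>UNIV. b s * Om k s ob * T k s a s') tau"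

text \<open>fut T Om k s os as: probability of observing os = [o_k, o_{k+1}, ...] when the
  state at step k is s and the actions as = [a_k, ...] are executed.\<close>
fun fut :: "(nat \<Rightarrow> 'S::finite \<Rightarrow> 'A \<Rightarrow> 'S \<Rightarrow> real) \<Rightarrow> (nat \<Rightarrow> 'S \<Rightarrow> 'O \<Rightarrow> real)
     \<Rightarrow> nat \<Rightarrow> 'S \<Rightarrow> 'O list \<Rightarrow> 'A list \<Rightarrow> real" where
  "fut T Om k s [] as = 1"
| "fut T Om k s [ob] as = Om k s ob"
| "fut T Om k s (ob # o' # os) (a # as) =
     Om k s ob * (\<Sum>s'\<in>UNIV. T k s a s' * fut T Om (Suc k) s' (o' # os) as)"
| "fut T Om k s (ob # o' # os) [] = 0"

definition hist_prob where
  "hist_prob mu T Om tau = (\<Sum>s\<in>UNIV. fwd T Om 1 mu tau s)"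

definition test_prob where
  "test_prob mu T Om tau t =
     (if hist_prob mu T Om tau = 0 then 0
      else (\<Sum>s\<in>UNIV. fwd T Om 1 mu tau s * fut T Om (Suc (length tau)) s (fst t) (snd t))
            / hist_prob mu T Om tau)"

definition tests_at :: "nat \<Rightarrow> nat \<Rightarrow> ('O list \<times> 'A list) set" where
  "tests_at H h = {(os, as). 1 \<le> length os \<and> h + length os \<le> H \<and> length as + 1 = length os}"

definition histories :: "nat \<Rightarrow> ('O \<times> 'A) list set" where
  "histories h = {tau. length tau = h}"

text \<open>Rank of a real matrix M with rows indexed by R and columns indexed by C:
  dimension of the span of its columns (as functions on the row index, zero outside R).\<close>
definition mat_rank :: "'r set \<Rightarrow> 'c set \<Rightarrow> ('r \<Rightarrow> 'c \<Rightarrow> real) \<Rightarrow> nat" where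
  "mat_rank R C M =
     vector_space.dim (\<lambda>(c::real) (f::'r \<Rightarrow> real). (\<lambda>x. c * f x))
       ((\<lambda>j. (\<lambda>i. if i \<in> R then M i j else 0)) ` C)"

text \<open>D_h: rows = tests starting at step h+1, columns = histories tau_h.\<close>
definition D_rank :: "nat \<Rightarrow> ('S::finite \<Rightarrow> real) \<Rightarrow> (nat \<Rightarrow> 'S \<Rightarrow> 'A::finite \<Rightarrow> 'S \<Rightarrow> real)
     \<Rightarrow> (nat \<Rightarrow> 'S \<Rightarrow> 'O::finite \<Rightarrow> real) \<Rightarrow> nat \<Rightarrow> nat" where
  "D_rank H mu T Om h =
     mat_rank (tests_at H h :: ('O list \<times> 'A list) set) (histories h)
       (\<lambda>t tau. test_prob mu T Om tau t)"

definition d_PSR :: "nat \<Rightarrow> ('S::finite \<Rightarrow> real) \<Rightarrow> (nat \<Rightarrow> 'S \<Rightarrow> 'A::finite \<Rightarrow> 'S \<Rightarrow> real)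
     \<Rightarrow> (nat \<Rightarrow> 'S \<Rightarrow> 'O::finite \<Rightarrow> real) \<Rightarrow> nat" where
  "d_PSR H mu T Om = Max ((\<lambda>h. D_rank H mu T Om h) ` {0..H})"

end

theory Submission
  imports Defs
begin

text \<open>In a low-rank POMDP the unnormalised belief over the state at step h+1 after a history
  ending with (o_h, a_h) is \<open>\<Sum>\<^sub>s b(s) O\<^sub>h(o_h|s) T\<^sub>h(s'|s,a_h) = \<Sum>\<^sub>i c\<^sub>i \<psi>\<^sub>h(s')\<^sub>i\<close>,
  a combination of the d functions \<open>\<psi>\<^sub>h(-)\<^sub>i\<close>. Hence \<open>P(t|\<tau>\<^sub>h) = \<Sum>\<^sub>i (c\<^sub>i / P(\<tau>\<^sub>h)) \<Sum>\<^sub>s\<^sub>' \<psi>\<^sub>h(s')\<^sub>i P(t|s')\<close>,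
  i.e. D_h factors through \<open>\<real>\<^sup>d\<close> and has rank at most d. For h = 0 the matrix has a single
  column, and d \<ge> 1 as soon as there is a step at all, since transition rows sum to 1.\<close>

lemma vector_space_pointwise: "vector_space (\<lambda>(c::real) (f::'r \<Rightarrow> real) x. c * f x)"
  by unfold_locales (auto simp: fun_eq_iff algebra_simps)

lemma sum_fun_apply: "(\<Sum>k\<in>A. f k) x = (\<Sum>k\<in>A. f k x)"
  for f :: "'k \<Rightarrow> 'r \<Rightarrow> 'a::comm_monoid_add"
  by (induction A rule: infinite_finite_induct) auto

lemma mat_rank_empty_rows:
  fixes M :: "'r \<Rightarrow> 'c \<Rightarrow> real"
  shows "mat_rank {} C M = 0"
proof -
  interpret pointwise: vector_space "\<lambda>(c::real) (f::'r \<Rightarrow> real) x. c * f x"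
    by (rule vector_space_pointwise)
  have "(\<lambda>j i. if i \<in> {} then M i j else 0) ` C \<subseteq> pointwise.span {}"
    by auto
  then show ?thesis
    unfolding mat_rank_def using pointwise.dim_le_card[of _ "{}"] by fastforce
qed

lemma mat_rank_le_card_cols:
  fixes M :: "'r \<Rightarrow> 'c \<Rightarrow> real"
  assumes "finite C"
  shows "mat_rank R C M \<le> card C"
proof -
  interpret pointwise: vector_space "\<lambda>(c::real) (f::'r \<Rightarrow> real) x. c * f x"
    by (rule vector_space_pointwise)
  show ?thesis
    unfolding mat_rank_def
    using pointwise.dim_le_card'[OF finite_imageI[OF assms]] card_image_le[OF assms]
    by (rule le_trans)
qed

lemma mat_rank_factor_le:
  fixes M :: "'r \<Rightarrow> 'c \<Rightarrow> real"
  assumes "\<And>i j. i \<in> R \<Longrightarrow> j \<in> C \<Longrightarrow> M i j = (\<Sum>k<d. A i k * B k j)"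
  shows "mat_rank R C M \<le> d"
proof -
  interpret pointwise: vector_space "\<lambda>(c::real) (f::'r \<Rightarrow> real) x. c * f x"
    by (rule vector_space_pointwise)
  define g where "g k = (\<lambda>i. if i \<in> R then A i k else 0)" for k
  have "(\<lambda>j i. if i \<in> R then M i j else 0) ` C \<subseteq> pointwise.span (g ` {..<d})"
  proof clarify
    fix j assume "j \<in> C"
    then have "(\<lambda>i. if i \<in> R then M i j else 0) = (\<Sum>k<d. (\<lambda>i. B k j * g k i))"
      by (auto simp: fun_eq_iff g_def assms mult.commute sum_fun_apply)
    also have "\<dots> \<in> pointwise.span (g ` {..<d})"
      by (intro pointwise.span_sum pointwise.span_scale pointwise.span_base) auto
    finally show "(\<lambda>i. if i \<in> R then M i j else 0) \<in> pointwise.span (g ` {..<d})" .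
  qed
  then have "mat_rank R C M \<le> card (g ` {..<d})"
    unfolding mat_rank_def by (rule pointwise.dim_le_card) auto
  also have "\<dots> \<le> d"
    using card_image_le[of "{..<d}" g] by simp
  finally show ?thesis .
qed

lemma fwd_snoc:
  "fwd T Om k b (xs @ [(ob, a)]) =
     (\<lambda>s'. \<Sum>s\<in>UNIV. fwd T Om k b xs s * Om (k + length xs) s ob * T (k + length xs) s a s')"
  by (induction xs arbitrary: k b) auto

text \<open>No case split for unreachable histories: there both sides are 0, since \<open>x / 0 = 0\<close>.\<close>
lemma test_prob_eq_divide:
  "test_prob mu T Om tau t =
     (\<Sum>s\<in>UNIV. fwd T Om 1 mu tau s * fut T Om (Suc (length tau)) s (fst t) (snd t))
       / hist_prob mu T Om tau"
  by (simp add: test_prob_def)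

lemma fwd_low_rank:
  assumes "\<And>s a s'. T (k + length xs) s a s' = (\<Sum>i<d. psi s' i * phi s a i)"
  shows "fwd T Om k b (xs @ [(ob, a)]) s' =
     (\<Sum>i<d. (\<Sum>s\<in>UNIV. fwd T Om k b xs s * Om (k + length xs) s ob * phi s a i) * psi s' i)"
  unfolding fwd_snoc assms
  by (simp add: sum_distrib_left sum_distrib_right sum.swap[of _ UNIV] mult_ac)

lemma test_prob_low_rank:
  assumes "\<And>s a s'. T h s a s' = (\<Sum>i<d. psi s' i * phi s a i)"
    and "length tau = h" and "h \<ge> 1"
  obtains c where "\<And>t. test_prob mu T Om tau t =
     (\<Sum>i<d. (\<Sum>s'\<in>UNIV. psi s' i * fut T Om (Suc h) s' (fst t) (snd t)) * c i)"
proof -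
  obtain xs ob a where tau: "tau = xs @ [(ob, a)]"
    using assms(2,3) by (metis le_numeral_extra(2) length_0_conv prod.exhaust rev_exhaust)
  define e where "e i = (\<Sum>s\<in>UNIV. fwd T Om 1 mu xs s * Om h s ob * phi s a i)" for i
  have "1 + length xs = h"
    using assms(2) tau by simp
  then have fwd_tau: "fwd T Om 1 mu tau s' = (\<Sum>i<d. e i * psi s' i)" for s'
    unfolding tau e_def using fwd_low_rank[where k = 1 and xs = xs and psi = psi and phi = phi] assms(1) by simp
  have "test_prob mu T Om tau t =
      (\<Sum>i<d. (\<Sum>s'\<in>UNIV. psi s' i * fut T Om (Suc h) s' (fst t) (snd t)) * (e i / hist_prob mu T Om tau))"
    for t
    unfolding test_prob_eq_divide fwd_tau assms(2)
    by (simp add: sum_distrib_left sum_distrib_right sum_divide_distrib sum.swap[of _ UNIV] mult_ac)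
  then show ?thesis
    by (rule that)
qed

lemma tests_at_empty: "H \<le> h \<Longrightarrow> tests_at H h = {}"
  by (auto simp: tests_at_def)

lemma histories_zero: "histories 0 = {[]}"
  by (auto simp: histories_def)

lemma low_rank_dim_pos:
  assumes "stochastic_pomdp H mu T Om" and "low_rank H d T" and "H \<ge> 1"
  shows "d > 0"
proof (rule ccontr)
  assume "\<not> d > 0"
  then have "T 1 s a s' = 0" for s a s'
    using assms(2,3) by (auto simp: low_rank_def)
  moreover have "(\<Sum>s'\<in>UNIV. T 1 s a s') = 1" for s a
    using assms(1,3) by (auto simp: stochastic_pomdp_def)
  ultimately show False
    by simp
qed

lemma D_rank_le_low_rank_dim:
  fixes T :: "nat \<Rightarrow> 's::finite \<Rightarrow> 'a::finite \<Rightarrow> 's \<Rightarrow> real"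
    and Om :: "nat \<Rightarrow> 's \<Rightarrow> 'o::finite \<Rightarrow> real"
  assumes "stochastic_pomdp H mu T Om" and "low_rank H d T" and "h \<le> H"
  shows "D_rank H mu T Om h \<le> d"
proof (cases "h = 0")
  case True
  show ?thesis
  proof (cases "H = 0")
    case True
    then show ?thesis
      using \<open>h = 0\<close> by (simp add: D_rank_def tests_at_empty mat_rank_empty_rows)
  next
    case False
    have "D_rank H mu T Om h \<le> 1"
      unfolding D_rank_def \<open>h = 0\<close> histories_zero using mat_rank_le_card_cols[of "{[]}"] by simp
    also have "1 \<le> d"
      using low_rank_dim_pos[OF assms(1,2)] False by simp
    finally show ?thesis .
  qed
next
  case False
  obtain psi phi where
    factor: "\<And>s a s'. T h s a s' = (\<Sum>i<d. psi s' i * phi s a i)"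
    using assms(2,3) False by (fastforce simp: low_rank_def)
  let ?A = "\<lambda>t i. \<Sum>s'\<in>UNIV. psi s' i * fut T Om (Suc h) s' (fst t) (snd t)"
  have "\<forall>tau\<in>histories h. \<exists>c. \<forall>t. test_prob mu T Om tau t = (\<Sum>i<d. ?A t i * c i)"
  proof
    fix tau :: "('o \<times> 'a) list"
    assume "tau \<in> histories h"
    then have "length tau = h" and "h \<ge> 1"
      using False by (auto simp: histories_def)
    then obtain c where "\<And>t. test_prob mu T Om tau t = (\<Sum>i<d. ?A t i * c i)"
      using test_prob_low_rank[where mu = mu and T = T and Om = Om and psi = psi and phi = phi, OF factor]
      by blast
    then show "\<exists>c. \<forall>t. test_prob mu T Om tau t = (\<Sum>i<d. ?A t i * c i)"
      by blast
  qed
  then obtain c where c: "\<forall>tau\<in>histories h. \<forall>t. test_prob mu T Om tau t = (\<Sum>i<d. ?A t i * c tau i)"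
    by (rule bchoice[THEN exE])
  show ?thesis
    unfolding D_rank_def using c by (intro mat_rank_factor_le[where A = ?A and B = "\<lambda>i tau. c tau i"]) blast
qed

theorem lemma14:
  fixes H d :: nat
    and mu :: "'S::finite \<Rightarrow> real"
    and T :: "nat \<Rightarrow> 'S \<Rightarrow> 'A::finite \<Rightarrow> 'S \<Rightarrow> real"
    and Om :: "nat \<Rightarrow> 'S \<Rightarrow> 'O::finite \<Rightarrow> real"
  assumes "stochastic_pomdp H mu T Om"
    and "low_rank H d T"
  shows "(\<forall>h\<le>H. D_rank H mu T Om h \<le> d) \<and> d_PSR H mu T Om \<le> d"
proof -
  have D_rank_le: "\<forall>h\<le>H. D_rank H mu T Om h \<le> d"
    using D_rank_le_low_rank_dim[OF assms] by blast
  moreover have "d_PSR H mu T Om \<le> d"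
    unfolding d_PSR_def using D_rank_le by (subst Max_le_iff) auto
  ultimately show ?thesis ..
qed

end
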